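(* There is a constant $c<\infty$ such that $\|\alpha_s\|^2_{L^2(\nu)}\le cs$ for all sufficiently small $s>0$.
   Context: Let $d\ge 2$, $\mathbb T$ the infinite $(d+1)$-regular tree rooted at $o$, $\bar o$ a fixed neighbour of $o$, $\mathbb T^+:=\{x:\bar o\text{ not on the geodesic from }o\text{ to }x\}$. Let $\phi$ be the Gaussian free field on $\mathbb T$ (centred Gaussian, covariance the Green function $g(x,y)=\frac1{d+1}\mathbb E_x[\sum_{k\ge0}1_{X_k=y}]$ of simple random walk), $P$ its law and $P_a:=P[\cdot\mid\phi_o=a]$ with expectation $E_a$ (equivalently, $\phi_o=a$ and $\phi_x=\frac1d\phi_{\bar x}+Y_x$ with $\bar x$ the parent of $x$ and $(Y_x)$ i.i.d. $\mathcal N(0,\frac{d+1}d)$). $\mathcal C_o^h$ is the connected component of $o$ in $\{x:\phi_x\ge h\}$, $h^*:=\inf\{h:P[|\mathcal C_o^h|=\infty]=0\}$. Let $\nu=\mathcal N(0,\frac d{d-1})$, $\rho_Y$ the density of $\mathcal N(0,\frac{d+1}d)$, and $L:=L_{h^*}$ on $L^2(\nu)$, $L[f](a)=1_{[h^*,\infty)}(a)\,d\int_{h^*}^\infty f(x)\rho_Y(x-\frac ad)dx$. It is known that $L$ is self-adjoint, nonnegative, Hilbert–Schmidt, with simple top eigenvalue $1$ and unique nonnegative unit-norm eigenfunction $\chi$, continuous, strictly positive on $[h^*,\infty)$ and zero on $(-\infty,h^* )$. Let $T:=|\mathcal C_o^{h^*}\cap\mathbb T^+|$, $\gamma_s(a):=1-E_a[e^{-sT}]$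 (a function of $a\in\mathbb R$ in $L^2(\nu)$), $a_1(s):=\langle\gamma_s,\chi\rangle_{L^2(\nu)}$ and $\alpha_s:=a_1(s)\chi$. *)

theory Defs
  imports "HOL-Probability.Probability"
begin

text \<open>Encoding of the (d+1)-regular tree rooted at o: a vertex is the REVERSED list of
  child indices along the geodesic from o (head = last step).  The first step from o
  (the last list element) lies in {0..d}, all later steps in {0..d-1}.  The fixed
  neighbour obar of o is the vertex [d].\<close>

definition is_vertex :: "nat \<Rightarrow> nat list \<Rightarrow> bool" where
  "is_vertex d xs = (\<forall>k<length xs. xs ! k < (if k = length xs - 1 then Suc d else d))"

text \<open>T^+ : vertices whose geodesic from o does not pass through obar = [d].\<close>
definition in_Tplus :: "nat \<Rightarrow> nat list \<Rightarrow> bool" where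
  "in_Tplus d xs = (is_vertex d xs \<and> (xs \<noteq> [] \<longrightarrow> last xs \<noteq> d))"

text \<open>Law of the increments Y_x ~ N(0,(d+1)/d) (normal_density takes the standard deviation).\<close>
definition Ylaw :: "nat \<Rightarrow> real measure" where
  "Ylaw d = density lborel (normal_density 0 (sqrt ((real d + 1) / real d)))"

text \<open>nu = N(0, d/(d-1)), the law of phi_o.\<close>
definition nu :: "nat \<Rightarrow> real measure" where
  "nu d = density lborel (normal_density 0 (sqrt (real d / (real d - 1))))"

definition Yfield :: "nat \<Rightarrow> (nat list \<Rightarrow> real) measure" where
  "Yfield d = (\<Pi>\<^sub>M x\<in>UNIV. Ylaw d)"

primrec phi :: "nat \<Rightarrow> real \<Rightarrow> (nat list \<Rightarrow> real) \<Rightarrow> nat list \<Rightarrow> real" where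
  "phi d a Y [] = a"
| "phi d a Y (i # xs) = phi d a Y xs / real d + Y (i # xs)"

text \<open>Connected component of o in {x. phi_x \<ge> h} (empty if phi_o < h).\<close>
definition cluster :: "nat \<Rightarrow> real \<Rightarrow> real \<Rightarrow> (nat list \<Rightarrow> real) \<Rightarrow> nat list set" where
  "cluster d h a Y = {x. is_vertex d x \<and> (\<forall>k\<le>length x. h \<le> phi d a Y (drop k x))}"

definition hstar :: "nat \<Rightarrow> real" where
  "hstar d = Inf {h. measure (nu d \<Otimes>\<^sub>M Yfield d)
                     {(a, Y). infinite (cluster d h a Y)} = 0}"

definition laplaceT :: "nat \<Rightarrow> real \<Rightarrow> real \<Rightarrow> real" where
  "laplaceT d s a = (\<integral>Y. (let C = cluster d (hstar d) a Y \<inter> {x. in_Tplus d x} in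
        if finite C then exp (- s * real (card C)) else 0) \<partial>Yfield d)"

definition gamma :: "nat \<Rightarrow> real \<Rightarrow> real \<Rightarrow> real" where
  "gamma d s a = 1 - laplaceT d s a"

definition rhoY :: "nat \<Rightarrow> real \<Rightarrow> real" where
  "rhoY d = normal_density 0 (sqrt ((real d + 1) / real d))"

definition Lop :: "nat \<Rightarrow> real \<Rightarrow> (real \<Rightarrow> real) \<Rightarrow> real \<Rightarrow> real" where
  "Lop d h f a = (if h \<le> a then real d * (LINT x:{h..}|lborel. f x * rhoY d (x - a / real d)) else 0)"

definition a1 :: "nat \<Rightarrow> (real \<Rightarrow> real) \<Rightarrow> real \<Rightarrow> real" where
  "a1 d ef s = (\<integral>a. gamma d s a * ef a \<partial>nu d)"

definition alpha :: "nat \<Rightarrow> (real \<Rightarrow> real) \<Rightarrow> real \<Rightarrow> real \<Rightarrow> real" where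
  "alpha d ef s a = a1 d ef s * ef a"

end

theory Submission
  imports Defs
begin

text \<open>Write W for L gamma_s / d, the mean of gamma_s at a child of the root. Since T splits
  into the root and d independent copies hanging off the children of o, on [h*, oo) we have
  1 - gamma_s = exp(-s) (1 - W)^d, and (1 - W)^d >= 1 - d W + W^2 gives the pointwise bound
  gamma_s <= s + d W - W^2. Integrating against chi and using
  <L gamma_s, chi> = <gamma_s, L chi> = <gamma_s, chi> (L is self-adjoint because the Gaussian
  transition kernel is reversible for nu), the linear terms cancel and <W^2, chi> <= s <1, chi>.
  Cauchy-Schwarz then gives a_1(s)^2 = d^2 <W, chi>^2 <= d^2 <W^2, chi> <1, chi> <= d^2 <1, chi>^2 s.\<close>

section \<open>Recursive structure of the cluster in T^+\<close>

text \<open>The field on the subtree below the child [i] of o, re-rooted at [i].\<close>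
definition child_field :: "nat \<Rightarrow> (nat list \<Rightarrow> real) \<Rightarrow> nat list \<Rightarrow> real" where
  "child_field i Y = (\<lambda>zs. Y (zs @ [i]))"

lemma phi_snoc: "phi d a Y (ys @ [i]) = phi d (a / real d + Y [i]) (child_field i Y) ys"
  by (induction ys) (auto simp: child_field_def)

lemma phi_root_update: "phi d b (Y([] := c)) x = phi d b Y x"
  by (induction x) auto

lemma in_Tplus_iff: "in_Tplus d xs \<longleftrightarrow> (\<forall>j\<in>set xs. j < d)"
proof (cases xs rule: rev_cases)
  case (snoc ys i)
  have "is_vertex d (ys @ [i]) \<longleftrightarrow> (\<forall>k<length ys. ys ! k < d) \<and> i < Suc d"
    by (auto simp: is_vertex_def nth_append)
  then show ?thesis
    using snoc by (auto simp: in_Tplus_def all_set_conv_all_nth)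
qed (simp add: in_Tplus_def is_vertex_def)

lemma in_Tplus_snoc: "in_Tplus d (ys @ [i]) \<longleftrightarrow> in_Tplus d ys \<and> i < d"
  by (auto simp: in_Tplus_iff)

definition cluster_plus :: "nat \<Rightarrow> real \<Rightarrow> real \<Rightarrow> (nat list \<Rightarrow> real) \<Rightarrow> nat list set" where
  "cluster_plus d h a Y = cluster d h a Y \<inter> {x. in_Tplus d x}"

lemma mem_cluster_plus:
  "x \<in> cluster_plus d h a Y \<longleftrightarrow> in_Tplus d x \<and> (\<forall>k\<le>length x. h \<le> phi d a Y (drop k x))"
  by (auto simp: cluster_plus_def cluster_def in_Tplus_def)

lemma Nil_mem_cluster_plus: "[] \<in> cluster_plus d h a Y \<longleftrightarrow> h \<le> a"
  by (simp add: mem_cluster_plus in_Tplus_iff)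

lemma snoc_mem_cluster_plus:
  "ys @ [i] \<in> cluster_plus d h a Y \<longleftrightarrow>
     i < d \<and> h \<le> a \<and> ys \<in> cluster_plus d h (a / real d + Y [i]) (child_field i Y)"
proof -
  have all_le_Suc: "(\<forall>k\<le>Suc n. P k) \<longleftrightarrow> P (Suc n) \<and> (\<forall>k\<le>n. P k)" for P and n :: nat
    by (auto simp: le_Suc_eq)
  have "phi d a Y (drop k (ys @ [i])) = phi d (a / real d + Y [i]) (child_field i Y) (drop k ys)"
    if "k \<le> length ys" for k
    using that by (simp add: phi_snoc)
  then show ?thesis
    unfolding mem_cluster_plus in_Tplus_snoc length_append_singleton all_le_Suc
    by auto
qed

lemma cluster_plus_below:
  assumes "a < h"
  shows "cluster_plus d h a Y = {}"
proof -
  have "x \<notin> cluster_plus d h a Y" for x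
    using assms by (auto simp: mem_cluster_plus dest: spec[where x = "length x"])
  then show ?thesis
    by blast
qed

lemma cluster_plus_rec:
  assumes "h \<le> a"
  shows "cluster_plus d h a Y =
    insert [] (\<Union>i<d. (\<lambda>ys. ys @ [i]) ` cluster_plus d h (a / real d + Y [i]) (child_field i Y))"
proof (intro set_eqI)
  fix x
  show "x \<in> cluster_plus d h a Y \<longleftrightarrow>
      x \<in> insert [] (\<Union>i<d. (\<lambda>ys. ys @ [i]) ` cluster_plus d h (a / real d + Y [i]) (child_field i Y))"
    by (cases x rule: rev_cases) (auto simp: assms Nil_mem_cluster_plus snoc_mem_cluster_plus)
qed

definition cluster_weight :: "nat \<Rightarrow> real \<Rightarrow> real \<Rightarrow> real \<Rightarrow> (nat list \<Rightarrow> real) \<Rightarrow> real" where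
  "cluster_weight d h s a Y =
    (if finite (cluster_plus d h a Y) then exp (- s * real (card (cluster_plus d h a Y))) else 0)"

lemma cluster_weight_below: "a < h \<Longrightarrow> cluster_weight d h s a Y = 1"
  by (simp add: cluster_weight_def cluster_plus_below)

lemma cluster_weight_bounds: "0 \<le> s \<Longrightarrow> 0 \<le> cluster_weight d h s a Y \<and> cluster_weight d h s a Y \<le> 1"
  by (simp add: cluster_weight_def)

lemma cluster_weight_root_update: "cluster_weight d h s a (Y([] := c)) = cluster_weight d h s a Y"
  by (simp add: cluster_weight_def cluster_plus_def cluster_def phi_root_update)

lemma cluster_weight_rec:
  assumes "h \<le> a"
  shows "cluster_weight d h s a Y =
    exp (- s) * (\<Prod>i<d. cluster_weight d h s (a / real d + Y [i]) (child_field i Y))"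
proof -
  define A where "A i = cluster_plus d h (a / real d + Y [i]) (child_field i Y)" for i
  have C: "cluster_plus d h a Y = insert [] (\<Union>i<d. (\<lambda>ys. ys @ [i]) ` A i)"
    using cluster_plus_rec[OF assms] by (simp add: A_def)
  have inj: "inj_on (\<lambda>ys. ys @ [i]) X" for i :: nat and X
    by (auto intro: inj_onI)
  show ?thesis
  proof (cases "\<forall>i<d. finite (A i)")
    case True
    have disj: "disjoint_family_on (\<lambda>i. (\<lambda>ys. ys @ [i]) ` A i) {..<d}"
      by (auto simp: disjoint_family_on_def)
    have "[] \<notin> (\<Union>i<d. (\<lambda>ys. ys @ [i]) ` A i)"
      by auto
    moreover have "card (\<Union>i<d. (\<lambda>ys. ys @ [i]) ` A i) = (\<Sum>i<d. card (A i))"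
      using card_UN_disjoint'[OF disj] True by (simp add: card_image[OF inj])
    ultimately have "card (cluster_plus d h a Y) = Suc (\<Sum>i<d. card (A i))"
      unfolding C using True by simp
    moreover have "exp (- s * real (Suc n)) = exp (- s) * exp (\<Sum>i<d. - s * real (card (A i)))"
      if "n = (\<Sum>i<d. card (A i))" for n
      by (simp add: that exp_add[symmetric] sum_distrib_left algebra_simps)
    ultimately show ?thesis
      using True by (simp add: cluster_weight_def C exp_sum A_def[symmetric])
  next
    case False
    then obtain j where j: "j < d" "infinite (A j)" by auto
    then have "infinite ((\<lambda>ys. ys @ [j]) ` A j)"
      using finite_imageD inj by blast
    then have "infinite (cluster_plus d h a Y)"
      unfolding C using j(1) by (meson UN_I finite_insert finite_subset lessThan_iff subsetI)
    moreover have "cluster_weight d h s (a / real d + Y [j]) (child_field j Y) = 0"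
      using j by (simp add: cluster_weight_def A_def)
    ultimately show ?thesis
      using j(1) by (auto simp: cluster_weight_def[of d h s a Y] intro!: prod_zero)
  qed
qed

section \<open>Measurability\<close>

lemma sets_Ylaw [simp]: "sets (Ylaw d) = sets borel"
  by (simp add: Ylaw_def)

lemma space_Ylaw [simp]: "space (Ylaw d) = UNIV"
  by (simp add: Ylaw_def)

lemma space_Yfield [simp]: "space (Yfield d) = UNIV"
  by (simp add: Yfield_def space_PiM)

lemma space_nu [simp]: "space (nu d) = UNIV"
  by (simp add: nu_def)

lemma measurable_Ylaw_eq: "measurable (Ylaw d) N = measurable borel N"
  by (rule measurable_cong_sets) simp_all

lemma measurable_nu_eq: "measurable (nu d) N = measurable borel N"
  by (rule measurable_cong_sets) (simp_all add: nu_def)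

lemma measurable_into_Ylaw_eq: "measurable M (Ylaw d) = measurable M borel"
  by (rule measurable_cong_sets) simp_all

lemma measurable_Yfield_coord [measurable]: "(\<lambda>Y. Y x) \<in> borel_measurable (Yfield d)"
  using measurable_component_singleton[of x UNIV "\<lambda>_. Ylaw d"]
  by (simp add: Yfield_def measurable_into_Ylaw_eq)

lemma measurable_into_Yfield:
  assumes "\<And>x. (\<lambda>w. f w x) \<in> borel_measurable M"
  shows "f \<in> measurable M (Yfield d)"
  unfolding Yfield_def
  by (rule measurable_PiM_single') (simp_all add: assms measurable_into_Ylaw_eq)

lemma measurable_phi [measurable]:
  "(\<lambda>p. phi d (fst p) (snd p) x) \<in> borel_measurable (borel \<Otimes>\<^sub>M Yfield d)"
proof (induction x)
  case (Cons i xs)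
  have "(\<lambda>p. snd p (i # xs)) \<in> borel_measurable (borel \<Otimes>\<^sub>M Yfield d)"
    by measurable
  with Cons show ?case
    by simp
qed simp

lemma measurable_mem_cluster_plus [measurable]:
  "Measurable.pred (borel \<Otimes>\<^sub>M Yfield d) (\<lambda>p. x \<in> cluster_plus d h (fst p) (snd p))"
  unfolding mem_cluster_plus by measurable

definition Tplus_ball :: "nat \<Rightarrow> nat \<Rightarrow> nat list set" where
  "Tplus_ball d n = {x. in_Tplus d x \<and> length x \<le> n}"

lemma finite_Tplus_ball: "finite (Tplus_ball d n)"
proof (rule finite_subset)
  show "Tplus_ball d n \<subseteq> {xs. set xs \<subseteq> {..<d} \<and> length xs \<le> n}"
    by (auto simp: Tplus_ball_def in_Tplus_iff)
qed (rule finite_lists_length_le, simp)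

lemma Tplus_ball_eventually_contains:
  assumes "finite B" "B \<subseteq> cluster_plus d h a Y"
  shows "\<forall>\<^sub>F n in sequentially. B \<subseteq> cluster_plus d h a Y \<inter> Tplus_ball d n"
proof -
  have "B \<subseteq> cluster_plus d h a Y \<inter> Tplus_ball d n" if "Max (insert 0 (length ` B)) \<le> n" for n
    using assms that by (fastforce simp: Tplus_ball_def mem_cluster_plus intro: le_trans[OF Max_ge])
  then show ?thesis
    unfolding eventually_sequentially by blast
qed

lemma cluster_weight_truncation_LIMSEQ:
  assumes "0 < s"
  shows "(\<lambda>n. exp (- s * real (card (cluster_plus d h a Y \<inter> Tplus_ball d n))))
    \<longlonglongrightarrow> cluster_weight d h s a Y"
proof (cases "finite (cluster_plus d h a Y)")
  case True
  then have "\<forall>\<^sub>F n in sequentially. cluster_plus d h a Y \<inter> Tplus_ball d n = cluster_plus d h a Y"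
    using Tplus_ball_eventually_contains[OF True order_refl] by (auto elim: eventually_mono)
  then show ?thesis
    using True by (auto simp: cluster_weight_def elim: tendsto_eventually[OF eventually_mono])
next
  case False
  have "filterlim (\<lambda>n. real (card (cluster_plus d h a Y \<inter> Tplus_ball d n))) at_top sequentially"
  proof (subst filterlim_at_top, intro allI)
    fix z :: real
    obtain B where B: "finite B" "card B = nat \<lceil>z\<rceil>" "B \<subseteq> cluster_plus d h a Y"
      using infinite_arbitrarily_large[OF False] by blast
    show "\<forall>\<^sub>F n in sequentially. z \<le> real (card (cluster_plus d h a Y \<inter> Tplus_ball d n))"
      using Tplus_ball_eventually_contains[OF B(1,3)]
    proof eventually_elim
      case (elim n)
      then have "card B \<le> card (cluster_plus d h a Y \<inter> Tplus_ball d n)"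
        by (intro card_mono) (simp_all add: finite_Tplus_ball)
      then show ?case
        using B(2) by linarith
    qed
  qed
  then have "filterlim (\<lambda>n. - s * real (card (cluster_plus d h a Y \<inter> Tplus_ball d n))) at_bot sequentially"
    using filterlim_tendsto_pos_mult_at_top[OF tendsto_const assms] by (simp add: filterlim_uminus_at_bot)
  then show ?thesis
    using False by (simp add: cluster_weight_def filterlim_compose[OF exp_at_bot])
qed

lemma measurable_cluster_weight:
  assumes "0 < s"
  shows "(\<lambda>p. cluster_weight d h s (fst p) (snd p)) \<in> borel_measurable (borel \<Otimes>\<^sub>M Yfield d)"
proof (rule borel_measurable_LIMSEQ_real)
  fix n
  have "card (C \<inter> Tplus_ball d n) = (\<Sum>x\<in>Tplus_ball d n. if x \<in> C then 1 else 0)" for C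
  proof -
    have "card (C \<inter> Tplus_ball d n) = (\<Sum>x\<in>Tplus_ball d n \<inter> C. 1)"
      by (simp add: Int_commute)
    also have "\<dots> = (\<Sum>x\<in>Tplus_ball d n. if x \<in> C then 1 else 0)"
      by (rule sum.inter_restrict[OF finite_Tplus_ball])
    finally show ?thesis .
  qed
  then show "(\<lambda>p. exp (- s * real (card (cluster_plus d h (fst p) (snd p) \<inter> Tplus_ball d n))))
      \<in> borel_measurable (borel \<Otimes>\<^sub>M Yfield d)"
    by simp measurable
qed (rule cluster_weight_truncation_LIMSEQ[OF assms])

lemma measurable_cluster_weight_comp:
  assumes "0 < s" "f \<in> borel_measurable M" "g \<in> measurable M (Yfield d)"
  shows "(\<lambda>x. cluster_weight d h s (f x) (g x)) \<in> borel_measurable M"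
  using measurable_compose[OF measurable_Pair[OF assms(2,3)] measurable_cluster_weight[OF assms(1)]]
  by simp

section \<open>The recursion for the Laplace transform of T\<close>

lemma prob_space_Ylaw: "1 \<le> d \<Longrightarrow> prob_space (Ylaw d)"
  unfolding Ylaw_def by (rule prob_space_normal_density) simp

lemma prob_space_nu: "2 \<le> d \<Longrightarrow> prob_space (nu d)"
  unfolding nu_def by (rule prob_space_normal_density) simp

lemma prob_space_Yfield: "1 \<le> d \<Longrightarrow> prob_space (Yfield d)"
  unfolding Yfield_def by (rule prob_space_PiM) (rule prob_space_Ylaw)

lemma measurable_child_field: "child_field i \<in> measurable (Yfield d) (Yfield d)"
  unfolding child_field_def by (rule measurable_into_Yfield) simp

lemma distr_child_field:
  assumes "1 \<le> d"
  shows "distr (Yfield d) (Yfield d) (child_field i) = Yfield d"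
proof -
  have "(\<lambda>\<omega>. \<lambda>n\<in>UNIV. \<omega> (n @ [i])) = child_field i"
    by (intro ext) (simp add: child_field_def)
  then show ?thesis
    using distr_PiM_reindex[of UNIV "\<lambda>_. Ylaw d" "\<lambda>ys. ys @ [i]" UNIV] prob_space_Ylaw[OF assms]
    by (simp add: Yfield_def inj_on_def)
qed

lemma indep_vars_Yfield_coords:
  assumes "1 \<le> d"
  shows "prob_space.indep_vars (Yfield d) (\<lambda>_. Ylaw d) (\<lambda>x Y. Y x) UNIV"
proof -
  interpret P: prob_space "Yfield d"
    by (rule prob_space_Yfield[OF assms])
  have "distr (Yfield d) (Ylaw d) (\<lambda>Y. Y i) = Ylaw d" for i
    unfolding Yfield_def by (rule distr_PiM_component) (simp_all add: prob_space_Ylaw[OF assms])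
  moreover have "P.random_variable (Ylaw d) (\<lambda>Y. Y i)" for i
    using measurable_component_singleton[of i UNIV "\<lambda>_. Ylaw d"] by (simp add: Yfield_def)
  ultimately show ?thesis
    by (subst P.indep_vars_iff_distr_eq_PiM) (simp_all add: restrict_UNIV Yfield_def)
qed

text \<open>Applied to child_field i Y, the root value a / d + Z [] is the value of the field at the
  child [i].\<close>
definition child_weight :: "nat \<Rightarrow> real \<Rightarrow> real \<Rightarrow> real \<Rightarrow> (nat list \<Rightarrow> real) \<Rightarrow> real" where
  "child_weight d h s a Z = cluster_weight d h s (a / real d + Z []) Z"

lemma measurable_child_weight: "0 < s \<Longrightarrow> child_weight d h s a \<in> borel_measurable (Yfield d)"
  unfolding child_weight_def by (rule measurable_cluster_weight_comp) auto

lemma indep_vars_child_weights: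
  assumes "1 \<le> d" "0 < s"
  shows "prob_space.indep_vars (Yfield d) (\<lambda>_. borel) (\<lambda>i Y. child_weight d h s a (child_field i Y)) {..<d}"
proof -
  interpret P: prob_space "Yfield d"
    by (rule prob_space_Yfield[OF assms(1)])
  define K where "K i = range (\<lambda>ys. ys @ [i])" for i :: nat
  have "disjoint_family_on K {..<d}"
    by (auto simp: disjoint_family_on_def K_def)
  then have "P.indep_vars (\<lambda>j. Pi\<^sub>M (K j) (\<lambda>_. Ylaw d)) (\<lambda>j \<omega>. restrict \<omega> (K j)) {..<d}"
    by (intro P.indep_vars_restrict[OF indep_vars_Yfield_coords[OF assms(1)]]) auto
  moreover have "(\<lambda>Z. child_weight d h s a (\<lambda>ys. Z (ys @ [j])))
      \<in> borel_measurable (Pi\<^sub>M (K j) (\<lambda>_. Ylaw d))" for j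
  proof (rule measurable_compose[OF _ measurable_child_weight[OF assms(2)]])
    show "(\<lambda>Z ys. Z (ys @ [j])) \<in> measurable (Pi\<^sub>M (K j) (\<lambda>_. Ylaw d)) (Yfield d)"
    proof (rule measurable_into_Yfield)
      fix ys
      have "(\<lambda>Z. Z (ys @ [j])) \<in> measurable (Pi\<^sub>M (K j) (\<lambda>_. Ylaw d)) (Ylaw d)"
        by (rule measurable_component_singleton) (simp add: K_def)
      then show "(\<lambda>Z. Z (ys @ [j])) \<in> borel_measurable (Pi\<^sub>M (K j) (\<lambda>_. Ylaw d))"
        by (simp only: measurable_into_Ylaw_eq)
    qed
  qed
  ultimately have "P.indep_vars (\<lambda>_. borel)
      (\<lambda>j \<omega>. child_weight d h s a (\<lambda>ys. restrict \<omega> (K j) (ys @ [j]))) {..<d}"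
    by (rule P.indep_vars_compose2)
  moreover have "(\<lambda>ys. restrict \<omega> (K j) (ys @ [j])) = child_field j \<omega>" for j \<omega>
    by (auto simp: K_def child_field_def)
  ultimately show ?thesis
    by simp
qed

lemma integral_Yfield_split_root:
  fixes G :: "(nat list \<Rightarrow> real) \<Rightarrow> real"
  assumes "1 \<le> d" and G: "G \<in> borel_measurable (Yfield d)" and bound: "\<And>Y. \<bar>G Y\<bar> \<le> B"
  shows "(\<integral>Y. G Y \<partial>Yfield d) =
    (\<integral>y. (\<integral>X. G (X([] := y)) \<partial>Pi\<^sub>M (UNIV - {[]}) (\<lambda>_. Ylaw d)) \<partial>Ylaw d)"
proof -
  let ?Q = "Pi\<^sub>M (UNIV - {[]}) (\<lambda>_. Ylaw d)"
  let ?upd = "\<lambda>p. (snd p)([] := fst p)"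
  interpret Y: prob_space "Ylaw d"
    by (rule prob_space_Ylaw[OF assms(1)])
  interpret Q: prob_space ?Q
    by (rule prob_space_PiM) (rule prob_space_Ylaw[OF assms(1)])
  interpret PQ: pair_prob_space "Ylaw d" ?Q ..
  have upd: "?upd \<in> measurable (Ylaw d \<Otimes>\<^sub>M ?Q) (Yfield d)"
    unfolding Yfield_def by (rule measurable_fun_upd[where J="UNIV - {[]}"]) auto
  have "insert [] (UNIV - {[]}) = (UNIV :: nat list set)"
    by auto
  then have "distr (Ylaw d \<Otimes>\<^sub>M ?Q) (Yfield d) ?upd = Yfield d"
    using distr_pair_PiM_eq_PiM[of "UNIV - {[]}" "\<lambda>_. Ylaw d" "[]"] prob_space_Ylaw[OF assms(1)]
    by (simp add: Yfield_def split_beta')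
  then have "(\<integral>Y. G Y \<partial>Yfield d) = (\<integral>p. G (?upd p) \<partial>(Ylaw d \<Otimes>\<^sub>M ?Q))"
    using integral_distr[OF upd G] by simp
  also have "\<dots> = (\<integral>y. (\<integral>X. G (X([] := y)) \<partial>?Q) \<partial>Ylaw d)"
  proof -
    have "integrable (Ylaw d \<Otimes>\<^sub>M ?Q) (\<lambda>p. G (?upd p))"
      by (rule PQ.P.integrable_const_bound[where B=B]) (simp_all add: bound measurable_compose[OF upd G])
    from PQ.integral_fst'[OF this] show ?thesis
      by simp
  qed
  finally show ?thesis .
qed

definition laplace_cluster :: "nat \<Rightarrow> real \<Rightarrow> real \<Rightarrow> real \<Rightarrow> real" where
  "laplace_cluster d h s b = (\<integral>Y. cluster_weight d h s b Y \<partial>Yfield d)"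

lemma laplaceT_eq_laplace_cluster: "laplaceT d s b = laplace_cluster d (hstar d) s b"
  unfolding laplaceT_def laplace_cluster_def cluster_weight_def cluster_plus_def Let_def ..

lemma measurable_laplace_cluster [measurable]:
  assumes "1 \<le> d" "0 < s"
  shows "laplace_cluster d h s \<in> borel_measurable borel"
proof -
  interpret P: prob_space "Yfield d"
    by (rule prob_space_Yfield[OF assms(1)])
  show ?thesis
    unfolding laplace_cluster_def
    by (rule P.borel_measurable_lebesgue_integral) (simp add: split_beta' measurable_cluster_weight[OF assms(2)])
qed

lemma laplace_cluster_bounds:
  assumes "1 \<le> d" "0 < s"
  shows "0 \<le> laplace_cluster d h s b \<and> laplace_cluster d h s b \<le> 1"
proof -
  interpret P: prob_space "Yfield d"
    by (rule prob_space_Yfield[OF assms(1)])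
  have bounds: "0 \<le> cluster_weight d h s b Y" "cluster_weight d h s b Y \<le> 1" for Y
    using cluster_weight_bounds[of s] assms(2) by auto
  have "integrable (Yfield d) (cluster_weight d h s b)"
    by (rule P.integrable_const_bound[where B=1])
      (simp_all add: bounds measurable_cluster_weight_comp[OF assms(2)])
  then have "laplace_cluster d h s b \<le> (\<integral>Y. 1 \<partial>Yfield d)"
    unfolding laplace_cluster_def by (rule integral_mono) (simp_all add: bounds)
  moreover have "0 \<le> laplace_cluster d h s b"
    unfolding laplace_cluster_def by (rule integral_nonneg_AE) (simp add: bounds)
  ultimately show ?thesis
    using P.prob_space by simp
qed

lemma laplace_cluster_below: "1 \<le> d \<Longrightarrow> b < h \<Longrightarrow> laplace_cluster d h s b = 1"
  using prob_space.prob_space[OF prob_space_Yfield]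
  by (simp add: laplace_cluster_def cluster_weight_below)

lemma integral_child_weight:
  assumes "1 \<le> d" "0 < s"
  shows "(\<integral>Z. child_weight d h s a Z \<partial>Yfield d) = (\<integral>y. laplace_cluster d h s (a / real d + y) \<partial>Ylaw d)"
proof -
  let ?Q = "Pi\<^sub>M (UNIV - {[]}) (\<lambda>_. Ylaw d)"
  have bound: "\<bar>cluster_weight d h s b Y\<bar> \<le> 1" for b Y
    using cluster_weight_bounds[of s d h b Y] assms(2) by simp
  have "laplace_cluster d h s b = (\<integral>X. cluster_weight d h s b X \<partial>?Q)" for b
    using integral_Yfield_split_root[OF assms(1) measurable_cluster_weight_comp[OF assms(2)] bound]
      prob_space.prob_space[OF prob_space_Ylaw[OF assms(1)]]
    by (simp add: laplace_cluster_def cluster_weight_root_update)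
  then show ?thesis
    using integral_Yfield_split_root[OF assms(1) measurable_child_weight[OF assms(2)], where B=1]
    by (simp add: child_weight_def bound cluster_weight_root_update)
qed

lemma laplace_cluster_rec:
  assumes "1 \<le> d" "0 < s" "h \<le> a"
  shows "laplace_cluster d h s a =
    exp (- s) * (\<integral>y. laplace_cluster d h s (a / real d + y) \<partial>Ylaw d) ^ d"
proof -
  interpret P: prob_space "Yfield d"
    by (rule prob_space_Yfield[OF assms(1)])
  let ?w = "\<lambda>i Y. child_weight d h s a (child_field i Y)"
  have weight: "cluster_weight d h s a Y = exp (- s) * (\<Prod>i<d. ?w i Y)" for Y
    using cluster_weight_rec[OF assms(3)] by (simp add: child_weight_def child_field_def)
  have measurable: "?w i \<in> borel_measurable (Yfield d)" for i
    using measurable_compose[OF measurable_child_field measurable_child_weight[OF assms(2)]] by simp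
  have integrable: "integrable (Yfield d) (?w i)" for i
  proof (rule P.integrable_const_bound[where B=1])
    show "AE Y in Yfield d. norm (?w i Y) \<le> 1"
      using assms(2) cluster_weight_bounds[of s] by (simp add: child_weight_def)
  qed (rule measurable)
  have "(\<integral>Y. ?w i Y \<partial>Yfield d) = (\<integral>Z. child_weight d h s a Z \<partial>Yfield d)" for i
    using integral_distr[OF measurable_child_field measurable_child_weight[OF assms(2)], of d i h a]
    by (simp add: distr_child_field[OF assms(1)])
  moreover have "(\<integral>Y. (\<Prod>i<d. ?w i Y) \<partial>Yfield d) = (\<Prod>i<d. \<integral>Y. ?w i Y \<partial>Yfield d)"
    by (rule P.indep_vars_lebesgue_integral[OF _ indep_vars_child_weights[OF assms(1,2)] integrable]) simp
  ultimately have "(\<integral>Y. (\<Prod>i<d. ?w i Y) \<partial>Yfield d) = (\<integral>Z. child_weight d h s a Z \<partial>Yfield d) ^ d"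
    by simp
  then show ?thesis
    unfolding laplace_cluster_def[of d h s a] weight integral_child_weight[OF assms(1,2), symmetric]
    by simp
qed

section \<open>Self-adjointness of L\<close>

definition nu_density :: "nat \<Rightarrow> real \<Rightarrow> real" where
  "nu_density d = normal_density 0 (sqrt (real d / (real d - 1)))"

lemma nu_eq_density: "nu d = density lborel (\<lambda>x. ennreal (nu_density d x))"
  by (simp add: nu_def nu_density_def)

lemma measurable_nu_density [measurable]: "nu_density d \<in> borel_measurable borel"
  by (simp add: nu_density_def)

lemma measurable_rhoY [measurable]: "rhoY d \<in> borel_measurable borel"
  by (simp add: rhoY_def)

lemma nu_density_nonneg [simp]: "0 \<le> nu_density d x"
  by (simp add: nu_density_def)

lemma rhoY_nonneg [simp]: "0 \<le> rhoY d x"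
  by (simp add: rhoY_def)

lemma nu_density_rhoY_reversible:
  assumes "2 \<le> d"
  shows "nu_density d a * rhoY d (x - a / real d) = nu_density d x * rhoY d (a - x / real d)"
proof -
  define D where "D = real d"
  have D: "2 \<le> D"
    using assms by (simp add: D_def)
  have exponent: "z\<^sup>2 / (2 * (D / (D - 1))) + (w - z / D)\<^sup>2 / (2 * ((D + 1) / D)) =
      (D\<^sup>2 * (z\<^sup>2 + w\<^sup>2) - 2 * D * z * w) / (2 * D * (D + 1))" for z w
    using D by (simp add: divide_simps power2_eq_square) algebra
  have "- a\<^sup>2 / (2 * (D / (D - 1))) + - (x - a / D)\<^sup>2 / (2 * ((D + 1) / D)) =
        - x\<^sup>2 / (2 * (D / (D - 1))) + - (a - x / D)\<^sup>2 / (2 * ((D + 1) / D))"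
    using exponent[of a x] exponent[of x a] by (simp add: ac_simps)
  then show ?thesis
    using D by (simp add: nu_density_def rhoY_def normal_density_def exp_add[symmetric] D_def)
qed

text \<open>L without the factor d and the cut-off at h, as an extended nonnegative integral, so that
  Tonelli's theorem applies to it.\<close>
definition Lop_nn :: "nat \<Rightarrow> real \<Rightarrow> (real \<Rightarrow> real) \<Rightarrow> real \<Rightarrow> ennreal" where
  "Lop_nn d h f a = (\<integral>\<^sup>+x. ennreal (indicator {h..} x * f x * rhoY d (x - a / real d)) \<partial>lborel)"

lemma Lop_eq_Lop_nn:
  assumes f: "f \<in> borel_measurable borel" and nonneg: "\<And>x. 0 \<le> f x"
  shows "Lop d h f a = (if h \<le> a then real d * enn2real (Lop_nn d h f a) else 0)"
proof -
  have "(LINT x:{h..}|lborel. f x * rhoY d (x - a / real d)) =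
        (\<integral>x. indicator {h..} x * f x * rhoY d (x - a / real d) \<partial>lborel)"
    unfolding set_lebesgue_integral_def by (simp add: mult.assoc)
  also have "\<dots> = enn2real (Lop_nn d h f a)"
    unfolding Lop_nn_def using f nonneg by (intro integral_eq_nn_integral) (simp_all add: indicator_def)
  finally show ?thesis
    by (simp add: Lop_def)
qed

lemma measurable_Lop_nn:
  assumes [measurable]: "f \<in> borel_measurable borel"
  shows "Lop_nn d h f \<in> borel_measurable borel"
proof -
  have "(\<lambda>p. ennreal (indicator {h..} (snd p) * f (snd p) * rhoY d (snd p - fst p / real d)))
      \<in> borel_measurable (borel \<Otimes>\<^sub>M borel)"
    by measurable
  then have "(\<lambda>p. ennreal (indicator {h..} (snd p) * f (snd p) * rhoY d (snd p - fst p / real d)))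
      \<in> borel_measurable (borel \<Otimes>\<^sub>M lborel)"
    by (simp add: measurable_cong_sets[OF sets_pair_measure_cong[OF refl sets_lborel] refl])
  from lborel.borel_measurable_nn_integral_fst[OF this] show ?thesis
    by (simp add: Lop_nn_def[abs_def])
qed

lemma measurable_Lop:
  assumes "f \<in> borel_measurable borel" "\<And>x. 0 \<le> f x"
  shows "Lop d h f \<in> borel_measurable borel"
  using measurable_Lop_nn[OF assms(1)] by (simp add: Lop_eq_Lop_nn[OF assms, abs_def])

lemma nn_integral_rhoY_shift:
  assumes "1 \<le> d"
  shows "(\<integral>\<^sup>+x. ennreal (rhoY d (x - t)) \<partial>lborel) = 1"
proof -
  have "(\<integral>\<^sup>+x. ennreal (rhoY d (x - t)) \<partial>lborel) =
      (\<integral>\<^sup>+x. ennreal (rhoY d (x - t)) \<partial>distr lborel borel ((+) t))"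
    by (simp add: lborel_distr_plus)
  also have "\<dots> = (\<integral>\<^sup>+x. ennreal (rhoY d x) \<partial>lborel)"
    by (subst nn_integral_distr) auto
  also have "\<dots> = emeasure (Ylaw d) UNIV"
    by (simp add: Ylaw_def rhoY_def emeasure_density)
  finally show ?thesis
    using prob_space.emeasure_space_1[OF prob_space_Ylaw[OF assms]] by simp
qed

lemma Lop_nn_le_one:
  assumes "1 \<le> d" "\<And>x. 0 \<le> f x" "\<And>x. f x \<le> 1"
  shows "Lop_nn d h f a \<le> 1"
proof -
  have "Lop_nn d h f a \<le> (\<integral>\<^sup>+x. ennreal (rhoY d (x - a / real d)) \<partial>lborel)"
    unfolding Lop_nn_def using assms(2,3)
    by (intro nn_integral_mono ennreal_leI) (simp add: indicator_def mult_left_le_one_le)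
  then show ?thesis
    using nn_integral_rhoY_shift[OF assms(1)] by simp
qed

lemma Lop_bounds:
  assumes "1 \<le> d" "f \<in> borel_measurable borel" "\<And>x. 0 \<le> f x" "\<And>x. f x \<le> 1"
  shows "0 \<le> Lop d h f a \<and> Lop d h f a \<le> real d"
proof -
  have "enn2real (Lop_nn d h f a) \<le> 1"
    using Lop_nn_le_one[OF assms(1,3,4)] by (simp add: enn2real_leI)
  then show ?thesis
    using assms(1) by (simp add: Lop_eq_Lop_nn[OF assms(2,3)] enn2real_nonneg)
qed

text \<open>The reversibility of the kernel turns L into a symmetric operator on L^2(nu).\<close>
lemma Lop_nn_symmetric:
  assumes "2 \<le> d"
    and [measurable]: "f \<in> borel_measurable borel" "g \<in> borel_measurable borel"
    and nonneg: "\<And>x. 0 \<le> f x" "\<And>x. 0 \<le> g x"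
  shows "(\<integral>\<^sup>+a. ennreal (indicator {h..} a * g a) * Lop_nn d h f a \<partial>nu d) =
         (\<integral>\<^sup>+x. ennreal (indicator {h..} x * f x) * Lop_nn d h g x \<partial>nu d)"
proof -
  define P where "P a x = ennreal (indicator {h..} a * indicator {h..} x * g a * f x *
      (nu_density d a * rhoY d (x - a / real d)))" for a x
  have "case_prod P \<in> borel_measurable (borel \<Otimes>\<^sub>M borel)"
    unfolding P_def by measurable
  then have P: "case_prod P \<in> borel_measurable (lborel \<Otimes>\<^sub>M lborel)"
    by (simp add: measurable_cong_sets[OF sets_pair_measure_cong[OF sets_lborel sets_lborel] refl])
  have nu_integral: "(\<integral>\<^sup>+a. ennreal (indicator {h..} a * u a) * Lop_nn d h v a \<partial>nu d) =
      (\<integral>\<^sup>+a. ennreal (nu_density d a * indicator {h..} a * u a) * Lop_nn d h v a \<partial>lborel)"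
    if [measurable]: "u \<in> borel_measurable borel" "v \<in> borel_measurable borel" and "\<And>x. 0 \<le> u x" for u v
    unfolding nu_eq_density using measurable_Lop_nn[OF that(2)]
    by (subst nn_integral_density) (simp_all add: that(3) ennreal_mult'' mult.assoc)
  have "ennreal (nu_density d a * indicator {h..} a * g a) * Lop_nn d h f a = (\<integral>\<^sup>+x. P a x \<partial>lborel)" for a
    unfolding Lop_nn_def P_def using nonneg
    by (subst nn_integral_cmult[symmetric])
      (auto intro!: nn_integral_cong simp: ennreal_mult''[symmetric] indicator_def mult_ac)
  moreover have "ennreal (nu_density d x * indicator {h..} x * f x) * Lop_nn d h g x = (\<integral>\<^sup>+a. P a x \<partial>lborel)" for x
    unfolding Lop_nn_def P_def using nonneg
    by (subst nn_integral_cmult[symmetric])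
      (auto intro!: nn_integral_cong simp: ennreal_mult''[symmetric] indicator_def mult_ac
        nu_density_rhoY_reversible[OF assms(1)])
  ultimately show ?thesis
    using lborel_pair.Fubini'[OF P] by (simp add: nu_integral nonneg)
qed

lemma integrable_bounded_mult:
  fixes f g :: "'a \<Rightarrow> real"
  assumes "integrable M f" "g \<in> borel_measurable M" "\<And>x. \<bar>g x\<bar> \<le> B"
  shows "integrable M (\<lambda>x. g x * f x)"
proof (rule Bochner_Integration.integrable_bound)
  show "integrable M (\<lambda>x. B * f x)"
    using assms(1) by simp
  show "(\<lambda>x. g x * f x) \<in> borel_measurable M"
    using assms(1,2) by measurable
  have "0 \<le> B"
    using assms(3) abs_ge_zero order_trans by blast
  then show "AE x in M. norm (g x * f x) \<le> norm (B * f x)"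
    using assms(3) by (simp add: abs_mult mult_right_mono)
qed

lemma Lop_nn_eigenfunction:
  assumes "2 \<le> d" and chi [measurable]: "chi \<in> borel_measurable borel"
    and nonneg: "\<And>x. 0 \<le> chi x" and "integrable (nu d) chi"
    and eigen: "AE a in nu d. Lop d h chi a = chi a"
  shows "AE a in nu d. ennreal (indicator {h..} a) * Lop_nn d h chi a = ennreal (chi a / real d)"
proof -
  have "(\<integral>\<^sup>+a. ennreal (indicator {h..} a * 1) * Lop_nn d h chi a \<partial>nu d) =
      (\<integral>\<^sup>+x. ennreal (indicator {h..} x * chi x) * Lop_nn d h (\<lambda>_. 1) x \<partial>nu d)"
    by (rule Lop_nn_symmetric) (simp_all add: assms)
  also have "\<dots> \<le> (\<integral>\<^sup>+x. ennreal (chi x) \<partial>nu d)"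
    using Lop_nn_le_one[of d "\<lambda>_. 1"] assms(1) nonneg
    by (intro nn_integral_mono) (auto simp: indicator_def intro: mult_left_le)
  also have "\<dots> < \<infinity>"
    using assms(4) nonneg by (simp add: nn_integral_eq_integral)
  finally have "AE a in nu d. ennreal (indicator {h..} a * 1) * Lop_nn d h chi a \<noteq> \<infinity>"
    using measurable_Lop_nn[OF chi]
    by (intro nn_integral_PInf_AE) (simp_all add: measurable_nu_eq)
  then show ?thesis
    using eigen
  proof eventually_elim
    case (elim a)
    show ?case
    proof (cases "h \<le> a")
      case True
      then have "Lop_nn d h chi a = ennreal (enn2real (Lop_nn d h chi a))"
        using elim(1) by (simp add: ennreal_enn2real_if indicator_def)
      moreover have "chi a = real d * enn2real (Lop_nn d h chi a)"
        using elim(2) True by (simp add: Lop_eq_Lop_nn[OF chi nonneg])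
      ultimately show ?thesis
        using True assms(1) by simp
    next
      case False
      then show ?thesis
        using elim(2) by (simp add: Lop_def)
    qed
  qed
qed

lemma Lop_nn_bounded:
  assumes "1 \<le> d" "g \<in> borel_measurable borel" "\<And>x. 0 \<le> g x" "\<And>x. g x \<le> 1"
  shows "ennreal (indicator {h..} a) * Lop_nn d h g a = ennreal (Lop d h g a / real d)"
proof (cases "h \<le> a")
  case True
  have "Lop_nn d h g a \<le> 1"
    using assms by (intro Lop_nn_le_one) auto
  then have "Lop_nn d h g a = ennreal (enn2real (Lop_nn d h g a))"
    by (auto simp: ennreal_enn2real_if top_unique)
  then show ?thesis
    using True assms(1) by (simp add: Lop_eq_Lop_nn[OF assms(2,3)])
qed (simp add: Lop_def)

lemma integral_Lop_mult_eigenfunction: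
  assumes "2 \<le> d"
    and g [measurable]: "g \<in> borel_measurable borel" and g_bounds: "\<And>x. 0 \<le> g x" "\<And>x. g x \<le> 1"
    and chi [measurable]: "chi \<in> borel_measurable borel" and chi_nonneg: "\<And>x. 0 \<le> chi x"
    and chi_integrable: "integrable (nu d) chi"
    and eigen: "AE a in nu d. Lop d h chi a = chi a"
  shows "(\<integral>a. Lop d h g a * chi a \<partial>nu d) = (\<integral>a. g a * chi a \<partial>nu d)"
proof -
  have d_pos: "1 \<le> d" "0 < real d"
    using assms(1) by simp_all
  have Lop_g: "0 \<le> Lop d h g a" "Lop d h g a \<le> real d" for a
    using Lop_bounds[OF d_pos(1) g g_bounds] by auto
  have split: "ennreal (indicator {h..} a * u a) * Lop_nn d h v a =
      ennreal (u a) * (ennreal (indicator {h..} a) * Lop_nn d h v a)" if "0 \<le> u a" for u v a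
    using that by (simp add: ennreal_mult' mult_ac)
  have "ennreal (indicator {h..} a * chi a) * Lop_nn d h g a = ennreal (Lop d h g a * chi a / real d)" for a
    using split[of chi a g] chi_nonneg[of a]
    by (simp add: Lop_nn_bounded[OF d_pos(1) g g_bounds] ennreal_mult'[symmetric] mult_ac)
  then have "(\<integral>\<^sup>+a. ennreal (indicator {h..} a * chi a) * Lop_nn d h g a \<partial>nu d) =
      (\<integral>\<^sup>+a. ennreal (Lop d h g a * chi a / real d) \<partial>nu d)"
    by simp
  also have "\<dots> = ennreal (\<integral>a. Lop d h g a * chi a / real d \<partial>nu d)"
    using integrable_bounded_mult[OF chi_integrable, of "Lop d h g" "real d"] Lop_g chi_nonneg d_pos
    by (intro nn_integral_eq_integral)
      (simp_all add: measurable_nu_eq measurable_Lop[OF g g_bounds(1)])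
  also have "(\<integral>\<^sup>+a. ennreal (indicator {h..} a * chi a) * Lop_nn d h g a \<partial>nu d) =
      (\<integral>\<^sup>+a. ennreal (indicator {h..} a * g a) * Lop_nn d h chi a \<partial>nu d)"
    by (rule Lop_nn_symmetric[OF assms(1) g chi g_bounds(1) chi_nonneg])
  also have "\<dots> = (\<integral>\<^sup>+a. ennreal (g a * chi a / real d) \<partial>nu d)"
    using Lop_nn_eigenfunction[OF assms(1) chi chi_nonneg chi_integrable eigen]
    by (intro nn_integral_cong_AE)
      (auto elim!: eventually_mono simp: split[of g] g_bounds ennreal_mult'[symmetric])
  also have "\<dots> = ennreal (\<integral>a. g a * chi a / real d \<partial>nu d)"
    using integrable_bounded_mult[OF chi_integrable, of g 1] g_bounds chi_nonneg d_pos
    by (intro nn_integral_eq_integral) (simp_all add: measurable_nu_eq)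
  finally have "ennreal (\<integral>a. g a * chi a / real d \<partial>nu d) = ennreal (\<integral>a. Lop d h g a * chi a / real d \<partial>nu d)" .
  moreover have "0 \<le> (\<integral>a. Lop d h g a * chi a / real d \<partial>nu d)" "0 \<le> (\<integral>a. g a * chi a / real d \<partial>nu d)"
    using Lop_g g_bounds chi_nonneg d_pos by (auto intro!: integral_nonneg_AE)
  ultimately show ?thesis
    using d_pos by simp
qed

section \<open>The pointwise inequality for gamma\<close>

definition gammah :: "nat \<Rightarrow> real \<Rightarrow> real \<Rightarrow> real \<Rightarrow> real" where
  "gammah d h s b = 1 - laplace_cluster d h s b"

lemma gamma_eq_gammah: "gamma d s = gammah d (hstar d) s"
  by (simp add: fun_eq_iff gamma_def gammah_def laplaceT_eq_laplace_cluster)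

lemma measurable_gammah [measurable]: "1 \<le> d \<Longrightarrow> 0 < s \<Longrightarrow> gammah d h s \<in> borel_measurable borel"
  unfolding gammah_def by measurable

lemma gammah_bounds: "1 \<le> d \<Longrightarrow> 0 < s \<Longrightarrow> 0 \<le> gammah d h s b \<and> gammah d h s b \<le> 1"
  using laplace_cluster_bounds[of d s h b] by (simp add: gammah_def)

lemma gammah_below: "1 \<le> d \<Longrightarrow> b < h \<Longrightarrow> gammah d h s b = 0"
  by (simp add: gammah_def laplace_cluster_below)

lemma Lop_gammah:
  assumes "1 \<le> d" "0 < s" "h \<le> a"
  shows "Lop d h (gammah d h s) a = real d * (\<integral>y. gammah d h s (a / real d + y) \<partial>Ylaw d)"
proof -
  let ?g = "gammah d h s"
  have "(LINT x:{h..}|lborel. ?g x * rhoY d (x - a / real d)) = (\<integral>x. ?g x * rhoY d (x - a / real d) \<partial>lborel)"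
    unfolding set_lebesgue_integral_def
    by (rule Bochner_Integration.integral_cong) (auto simp: indicator_def gammah_below[OF assms(1)])
  also have "\<dots> = (\<integral>y. rhoY d y * ?g (a / real d + y) \<partial>lborel)"
    using lborel_integral_real_affine[of 1 "\<lambda>x. ?g x * rhoY d (x - a / real d)" "a / real d"]
    by (simp add: mult.commute)
  also have "\<dots> = (\<integral>y. ?g (a / real d + y) \<partial>Ylaw d)"
    unfolding Ylaw_def rhoY_def[symmetric]
    using measurable_gammah[OF assms(1,2)] by (subst integral_density) simp_all
  finally show ?thesis
    using assms(3) by (simp add: Lop_def)
qed

lemma one_minus_pow_ge:
  fixes w :: real
  assumes "2 \<le> n" "0 \<le> w" "w \<le> 1"
  shows "1 - real n * w + w\<^sup>2 \<le> (1 - w) ^ n"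
  using assms(1)
proof (induction n rule: dec_induct)
  case base
  then show ?case
    by (simp add: power2_eq_square algebra_simps)
next
  case (step n)
  have "1 - real (Suc n) * w + w\<^sup>2 \<le> (1 - real n * w + w\<^sup>2) * (1 - w)"
    using assms(2,3) step.hyps mult_right_mono[of w "real n" "w\<^sup>2"]
    by (simp add: algebra_simps power2_eq_square power3_eq_cube)
  also have "\<dots> \<le> (1 - w) ^ n * (1 - w)"
    using step.IH assms(3) by (intro mult_right_mono) auto
  finally show ?case
    by (simp add: mult.commute)
qed

text \<open>With W the mean of gamma at a child, 1 - gamma = exp(-s) (1 - W)^d by the recursion, and
  exp(-s) \<ge> 1 - s.\<close>
lemma gammah_le:
  fixes h a :: real
  assumes "2 \<le> d" "0 < s"
  defines "W \<equiv> Lop d h (gammah d h s) a / real d"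
  shows "gammah d h s a \<le> s + real d * W - W\<^sup>2"
proof (cases "h \<le> a")
  case False
  then show ?thesis
    using assms by (simp add: gammah_below Lop_def)
next
  case True
  have d: "1 \<le> d"
    using assms(1) by simp
  interpret Y: prob_space "Ylaw d"
    by (rule prob_space_Ylaw[OF d])
  note measurable_laplace_cluster[OF d assms(2), measurable]
  have "integrable (Ylaw d) (\<lambda>y. laplace_cluster d h s (a / real d + y))"
    using laplace_cluster_bounds[OF d assms(2)]
    by (intro Y.integrable_const_bound[where B=1]) (simp_all add: measurable_Ylaw_eq)
  then have W: "W = 1 - (\<integral>y. laplace_cluster d h s (a / real d + y) \<partial>Ylaw d)"
    using d Y.prob_space by (simp add: W_def Lop_gammah[OF d assms(2) True] gammah_def)
  have W_bounds: "0 \<le> W" "W \<le> 1"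
    using Lop_bounds[OF d measurable_gammah[OF d assms(2)], where h=h and a=a] gammah_bounds[OF d assms(2)] d
    by (auto simp: W_def)
  then have pow: "1 - real d * W + W\<^sup>2 \<le> (1 - W) ^ d" "0 \<le> (1 - W) ^ d" "(1 - W) ^ d \<le> 1"
    using one_minus_pow_ge[OF assms(1)] by (simp_all add: power_le_one)
  have "gammah d h s a = 1 - exp (- s) * (1 - W) ^ d"
    unfolding gammah_def laplace_cluster_rec[OF d assms(2) True] W by simp
  also have "\<dots> \<le> 1 - (1 - s) * (1 - W) ^ d"
    using exp_ge_add_one_self[of "- s"] pow(2) by (simp add: mult_right_mono)
  also have "\<dots> \<le> 1 - (1 - W) ^ d + s"
    using pow(3) assms(2) by (simp add: algebra_simps mult_left_le)
  also have "\<dots> \<le> s + real d * W - W\<^sup>2"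
    using pow(1) by simp
  finally show ?thesis .
qed


section \<open>The bound on alpha\<close>

lemma integral_mult_square_le:
  fixes W chi :: "'a \<Rightarrow> real"
  assumes W [measurable]: "W \<in> borel_measurable M" and W_bounds: "\<And>x. 0 \<le> W x" "\<And>x. W x \<le> 1"
    and chi_nonneg: "\<And>x. 0 \<le> chi x" and chi_integrable: "integrable M chi"
  shows "(\<integral>x. W x * chi x \<partial>M)\<^sup>2 \<le> (\<integral>x. (W x)\<^sup>2 * chi x \<partial>M) * (\<integral>x. chi x \<partial>M)"
proof -
  define A where "A = (\<integral>x. (W x)\<^sup>2 * chi x \<partial>M)"
  define B where "B = (\<integral>x. W x * chi x \<partial>M)"
  define C where "C = (\<integral>x. chi x \<partial>M)"
  have int_W: "integrable M (\<lambda>x. W x * chi x)"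
    using W_bounds by (intro integrable_bounded_mult[OF chi_integrable, where B=1]) auto
  have int_W2: "integrable M (\<lambda>x. (W x)\<^sup>2 * chi x)"
    using W_bounds by (intro integrable_bounded_mult[OF chi_integrable, where B=1]) (auto simp: power_le_one)
  have "B \<le> C" "0 \<le> B"
    unfolding B_def C_def using W_bounds chi_nonneg
    by (auto intro!: integral_mono[OF int_W chi_integrable] integral_nonneg_AE mult_left_le_one_le)
  have "(\<lambda>x. (C * W x - B)\<^sup>2 * chi x) = (\<lambda>x. C\<^sup>2 * ((W x)\<^sup>2 * chi x) - 2 * C * B * (W x * chi x) + B\<^sup>2 * chi x)"
    by (auto simp: power2_eq_square algebra_simps)
  then have "(\<integral>x. (C * W x - B)\<^sup>2 * chi x \<partial>M) = C\<^sup>2 * A - 2 * C * B * B + B\<^sup>2 * C"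
    using int_W int_W2 chi_integrable unfolding A_def B_def C_def by simp
  also have "\<dots> = C * (C * A - B\<^sup>2)"
    by (simp add: power2_eq_square algebra_simps)
  finally have "(\<integral>x. (C * W x - B)\<^sup>2 * chi x \<partial>M) = C * (C * A - B\<^sup>2)" .
  moreover have "0 \<le> (\<integral>x. (C * W x - B)\<^sup>2 * chi x \<partial>M)"
    using chi_nonneg by (intro integral_nonneg_AE) simp
  ultimately have "0 \<le> C * (C * A - B\<^sup>2)"
    by simp
  then show ?thesis
    using \<open>B \<le> C\<close> \<open>0 \<le> B\<close> unfolding A_def[symmetric] B_def[symmetric] C_def[symmetric]
    by (cases "C = 0") (auto simp: zero_le_mult_iff mult.commute)
qed

text \<open>The linear terms of the pointwise bound cancel after integration against an eigenfunction.\<close>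
lemma integral_square_Lop_gammah_le:
  assumes "2 \<le> d" "0 < s"
    and chi [measurable]: "chi \<in> borel_measurable borel" and chi_nonneg: "\<And>x. 0 \<le> chi x"
    and chi_integrable: "integrable (nu d) chi"
    and eigen: "AE a in nu d. Lop d h chi a = chi a"
  shows "(\<integral>a. (Lop d h (gammah d h s) a / real d)\<^sup>2 * chi a \<partial>nu d) \<le> s * (\<integral>a. chi a \<partial>nu d)"
proof -
  have d: "1 \<le> d" "0 < real d"
    using assms(1) by simp_all
  let ?g = "gammah d h s"
  let ?W = "\<lambda>a. Lop d h ?g a / real d"
  note measurable_gammah[OF d(1) assms(2), measurable]
  have g_bounds: "0 \<le> ?g x" "?g x \<le> 1" for x
    using gammah_bounds[OF d(1) assms(2)] by auto
  have W_bounds: "0 \<le> ?W x" "?W x \<le> 1" for x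
    using Lop_bounds[OF d(1) measurable_gammah[OF d(1) assms(2)] g_bounds] d(2) by auto
  have W [measurable]: "?W \<in> borel_measurable borel"
    using measurable_Lop[OF measurable_gammah[OF d(1) assms(2)] g_bounds(1)] by measurable
  have W_abs: "\<bar>?W x\<bar> \<le> 1" "\<bar>(?W x)\<^sup>2\<bar> \<le> 1" for x
    using W_bounds[of x] by (auto simp: power_le_one)
  have int_W: "integrable (nu d) (\<lambda>a. ?W a * chi a)"
    by (rule integrable_bounded_mult[OF chi_integrable _ W_abs(1)]) (simp add: measurable_nu_eq)
  have int_W2: "integrable (nu d) (\<lambda>a. (?W a)\<^sup>2 * chi a)"
    by (rule integrable_bounded_mult[OF chi_integrable _ W_abs(2)]) (simp add: measurable_nu_eq)
  have int_g: "integrable (nu d) (\<lambda>a. ?g a * chi a)"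
    using g_bounds by (intro integrable_bounded_mult[OF chi_integrable, where B=1]) (auto simp: measurable_nu_eq)
  have linear: "(\<integral>a. ?g a * chi a \<partial>nu d) = real d * (\<integral>a. ?W a * chi a \<partial>nu d)"
    using integral_Lop_mult_eigenfunction[OF assms(1) measurable_gammah[OF d(1) assms(2)] g_bounds chi
        chi_nonneg chi_integrable eigen] d(2)
    by simp
  have pointwise: "?g a * chi a \<le> s * chi a + real d * (?W a * chi a) - (?W a)\<^sup>2 * chi a" for a
    using mult_right_mono[OF gammah_le[OF assms(1,2), of h a] chi_nonneg[of a]] d(2)
    by (simp add: algebra_simps)
  have "(\<integral>a. ?g a * chi a \<partial>nu d) \<le>
      (\<integral>a. s * chi a + real d * (?W a * chi a) - (?W a)\<^sup>2 * chi a \<partial>nu d)"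
    by (intro integral_mono[OF int_g _ pointwise] Bochner_Integration.integrable_diff
        Bochner_Integration.integrable_add integrable_mult_right int_W int_W2 chi_integrable)
  also have "\<dots> = s * (\<integral>a. chi a \<partial>nu d) + real d * (\<integral>a. ?W a * chi a \<partial>nu d)
      - (\<integral>a. (?W a)\<^sup>2 * chi a \<partial>nu d)"
    by (simp only: Bochner_Integration.integral_diff Bochner_Integration.integral_add
        integral_mult_right_zero Bochner_Integration.integrable_add integrable_mult_right
        int_W int_W2 chi_integrable)
  finally show ?thesis
    using linear by linarith
qed

lemma integral_alpha_square_le:
  fixes ef :: "real \<Rightarrow> real"
  assumes "2 \<le> d" "0 < s"
    and ef [measurable]: "ef \<in> borel_measurable borel" and ef_nonneg: "\<And>a. 0 \<le> ef a"
    and "integrable (nu d) (\<lambda>a. (ef a)\<^sup>2)" and norm: "(\<integral>a. (ef a)\<^sup>2 \<partial>nu d) = 1"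
    and eigen: "AE a in nu d. Lop d (hstar d) ef a = ef a"
  shows "(\<integral>a. (alpha d ef s a)\<^sup>2 \<partial>nu d) \<le> (real d)\<^sup>2 * (\<integral>a. ef a \<partial>nu d)\<^sup>2 * s"
proof -
  interpret N: prob_space "nu d"
    by (rule prob_space_nu[OF assms(1)])
  have d: "1 \<le> d"
    using assms(1) by simp
  have ef_integrable: "integrable (nu d) ef"
  proof (rule N.square_integrable_imp_integrable)
    show "ef \<in> borel_measurable (nu d)"
      by (simp add: measurable_nu_eq)
  qed (use assms(5) in simp)
  let ?g = "gammah d (hstar d) s"
  let ?W = "\<lambda>a. Lop d (hstar d) ?g a / real d"
  have g_bounds: "0 \<le> ?g x" "?g x \<le> 1" for x
    using gammah_bounds[OF d assms(2)] by auto
  define A where "A = (\<integral>a. (?W a)\<^sup>2 * ef a \<partial>nu d)"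
  define B where "B = (\<integral>a. ?W a * ef a \<partial>nu d)"
  define C where "C = (\<integral>a. ef a \<partial>nu d)"
  have a1: "a1 d ef s = real d * B"
    using integral_Lop_mult_eigenfunction[OF assms(1) measurable_gammah[OF d assms(2)] g_bounds ef
        ef_nonneg ef_integrable eigen] assms(1)
    by (simp add: a1_def gamma_eq_gammah B_def)
  have "B\<^sup>2 \<le> A * C"
    unfolding A_def B_def C_def
    using Lop_bounds[OF d measurable_gammah[OF d assms(2)] g_bounds] assms(1)
      measurable_Lop[OF measurable_gammah[OF d assms(2)] g_bounds(1)]
    by (intro integral_mult_square_le ef_nonneg ef_integrable) (auto simp: measurable_nu_eq)
  moreover have "A \<le> s * C"
    unfolding A_def C_def by (rule integral_square_Lop_gammah_le[OF assms(1,2) ef ef_nonneg ef_integrable eigen])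
  moreover have "0 \<le> C"
    unfolding C_def using ef_nonneg by (intro integral_nonneg_AE) simp
  ultimately have "B\<^sup>2 \<le> s * C * C"
    by (meson mult_right_mono order_trans)
  have "(\<integral>a. (alpha d ef s a)\<^sup>2 \<partial>nu d) = (a1 d ef s)\<^sup>2"
    using norm by (simp add: alpha_def power_mult_distrib)
  also have "\<dots> = (real d)\<^sup>2 * B\<^sup>2"
    by (simp add: a1 power_mult_distrib)
  also have "\<dots> \<le> (real d)\<^sup>2 * (s * C * C)"
    using \<open>B\<^sup>2 \<le> s * C * C\<close> by (intro mult_left_mono) auto
  also have "\<dots> = (real d)\<^sup>2 * C\<^sup>2 * s"
    by (simp add: power2_eq_square)
  finally show ?thesis
    unfolding C_def .
qed

theorem lemma5p4:
  fixes d :: nat and ef :: "real \<Rightarrow> real"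
  assumes "d \<ge> 2"
    and "ef \<in> borel_measurable borel"
    and "\<forall>a. 0 \<le> ef a"
    and "integrable (nu d) (\<lambda>a. (ef a)\<^sup>2)"
    and "(\<integral>a. (ef a)\<^sup>2 \<partial>nu d) = 1"
    and "AE a in nu d. Lop d (hstar d) ef a = ef a"
  shows "\<exists>c::real. \<forall>\<^sub>F s in at_right 0. (\<integral>a. (alpha d ef s a)\<^sup>2 \<partial>nu d) \<le> c * s"
proof
  show "\<forall>\<^sub>F s in at_right 0. (\<integral>a. (alpha d ef s a)\<^sup>2 \<partial>nu d) \<le> ((real d)\<^sup>2 * (\<integral>a. ef a \<partial>nu d)\<^sup>2) * s"
    using integral_alpha_square_le[OF assms(1) _ assms(2) _ assms(4-6)] assms(3)
    by (auto simp: eventually_at_right_field intro: exI[of _ 1])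
qed

end
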